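(* Let $(X,d)$ be a complete metric space with $|X|\geqslant 3$ and let $T\colon X\to X$ be continuous and asymptotically regular, and suppose there exist $\alpha\in[0,\frac12)$ and $\lambda\in[0,\infty)$ such that $$d(Tx,Ty)+d(Ty,Tz)+d(Tx,Tz)\leqslant \alpha\big(d(x,y)+d(y,z)+d(z,x)\big)+\lambda\big(d(x,Tx)+d(y,Ty)+d(z,Tz)\big)$$ for all pairwise distinct $x,y,z\in X$. Then $T$ has a fixed point, and $T$ has at most two fixed points.
   Context: A mapping $T\colon X\to X$ on a metric space is asymptotically regular if $\lim_{n\to\infty}d(T^{n+1}x,T^nx)=0$ for every $x\in X$. *)

theory Defs
  imports "HOL-Analysis.Analysis"
begin

definition asymptotically_regular :: "('a::metric_space \<Rightarrow> 'a) \<Rightarrow> bool" where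
  "asymptotically_regular T \<longleftrightarrow>
     (\<forall>x. (\<lambda>n. dist ((T ^^ Suc n) x) ((T ^^ n) x)) \<longlonglongrightarrow> 0)"

end

theory Submission
  imports Defs
begin

text \<open>
  Applied to three distinct fixed points, the three-point inequality gives
  \<open>S \<le> \<alpha> S\<close> for their positive perimeter \<open>S\<close>, so there are at most two.
  For existence, follow the orbit \<open>x\<^sub>n = T\<^sup>n x\<^sub>0\<close>. If it repeats a point it is
  eventually periodic, so its step lengths \<open>d(x\<^sub>n\<^sub>+\<^sub>1, x\<^sub>n)\<close> are eventually periodic;
  tending to \<open>0\<close>, they vanish and the orbit reaches a fixed point. Otherwise any
  \<open>x\<^sub>n, x\<^sub>n\<^sub>+\<^sub>1, x\<^sub>m\<close> are distinct, and the inequality for this triple together with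
  \<open>\<alpha> < 1/2\<close> bounds \<open>d(x\<^sub>n, x\<^sub>m)\<close> by \<open>(3 + \<lambda>)\<close> times three step lengths. Asymptotic
  regularity then makes the orbit Cauchy, and its limit is fixed by continuity.
\<close>

lemma finite_card_le_2_if_no_three_distinct:
  assumes "\<And>x y z. x \<in> S \<Longrightarrow> y \<in> S \<Longrightarrow> z \<in> S \<Longrightarrow> x \<noteq> y \<Longrightarrow> y \<noteq> z \<Longrightarrow> x \<noteq> z \<Longrightarrow> False"
  shows "finite S \<and> card S \<le> 2"
proof (rule ccontr)
  assume "\<not> (finite S \<and> card S \<le> 2)"
  then obtain B where "card B = 3" "B \<subseteq> S"
  proof (cases "finite S")
    case True
    then show ?thesis
      using that obtain_subset_with_card_n[of 3 S] \<open>\<not> (finite S \<and> card S \<le> 2)\<close> by auto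
  qed (use that infinite_arbitrarily_large in blast)
  then obtain x y z where "{x, y, z} \<subseteq> S" "x \<noteq> y" "x \<noteq> z" "y \<noteq> z"
    unfolding card_3_iff by blast
  then show False
    using assms[of x y z] by blast
qed

lemma fixpoint_if_orbit_not_inj:
  fixes T :: "'a::metric_space \<Rightarrow> 'a"
  assumes steps: "(\<lambda>n. dist ((T ^^ Suc n) x) ((T ^^ n) x)) \<longlonglongrightarrow> 0"
    and not_inj: "\<not> inj (\<lambda>n. (T ^^ n) x)"
  shows "\<exists>p. T p = p"
proof -
  obtain n m where "n < m" "(T ^^ n) x = (T ^^ m) x"
    using not_inj by (metis injI linorder_neqE_nat)
  define q where "q = m - n"
  have "q > 0"
    using \<open>n < m\<close> by (simp add: q_def)
  have "(T ^^ q) ((T ^^ n) x) = (T ^^ (q + n)) x"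
    by (simp add: funpow_add)
  also have "\<dots> = (T ^^ n) x"
    using \<open>n < m\<close> \<open>(T ^^ n) x = (T ^^ m) x\<close> by (simp add: q_def)
  finally have period: "(T ^^ q) ((T ^^ n) x) = (T ^^ n) x" .
  have periodic: "(T ^^ (n + j * q)) x = (T ^^ n) x" for j
  proof (induction j)
    case (Suc j)
    have "(T ^^ (n + Suc j * q)) x = (T ^^ (q + (n + j * q))) x"
      by (simp add: algebra_simps)
    also have "\<dots> = (T ^^ q) ((T ^^ n) x)"
      using Suc by (simp add: funpow_add)
    finally show ?case
      using period by simp
  qed simp
  have "strict_mono (\<lambda>j. n + j * q)"
    using \<open>q > 0\<close> by (simp add: strict_mono_def)
  from LIMSEQ_subseq_LIMSEQ[OF steps this]
  have "(\<lambda>j. dist (T ((T ^^ n) x)) ((T ^^ n) x)) \<longlonglongrightarrow> 0"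
    using periodic by (simp add: o_def)
  then have "T ((T ^^ n) x) = (T ^^ n) x"
    by (simp add: LIMSEQ_const_iff)
  then show ?thesis ..
qed

lemma Cauchy_if_dist_le_null:
  fixes X :: "nat \<Rightarrow> 'a::metric_space"
  assumes u: "u \<longlonglongrightarrow> 0"
    and dist_le: "\<And>n m. dist (X n) (X m) \<le> u n + u m"
  shows "Cauchy X"
proof (rule metric_CauchyI)
  fix e :: real
  assume "e > 0"
  then obtain N where N: "\<And>k. k \<ge> N \<Longrightarrow> \<bar>u k\<bar> < e / 2"
    using LIMSEQ_D[OF u, of "e / 2"] by auto
  have "dist (X n) (X m) < e" if "n \<ge> N" "m \<ge> N" for n m
    using dist_le[of n m] N[OF \<open>n \<ge> N\<close>] N[OF \<open>m \<ge> N\<close>] by linarith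
  then show "\<exists>M. \<forall>m\<ge>M. \<forall>n\<ge>M. dist (X m) (X n) < e"
    by blast
qed

lemma fixpoint_if_orbit_converges:
  fixes T :: "'a::metric_space \<Rightarrow> 'a"
  assumes "isCont T p" and "(\<lambda>n. (T ^^ n) x) \<longlonglongrightarrow> p"
  shows "T p = p"
proof (rule LIMSEQ_unique)
  show "(\<lambda>n. (T ^^ Suc n) x) \<longlonglongrightarrow> p"
    using assms(2) by (rule LIMSEQ_Suc)
  show "(\<lambda>n. (T ^^ Suc n) x) \<longlonglongrightarrow> T p"
    using isCont_tendsto_compose[OF assms] by simp
qed

locale three_point_contraction =
  fixes T :: "'a::metric_space \<Rightarrow> 'a" and alpha lam :: real
  assumes alpha_nonneg: "0 \<le> alpha" and alpha_less: "alpha < 1/2"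
    and lam_nonneg: "0 \<le> lam"
    and three_point: "\<And>x y z. x \<noteq> y \<Longrightarrow> y \<noteq> z \<Longrightarrow> x \<noteq> z \<Longrightarrow>
      dist (T x) (T y) + dist (T y) (T z) + dist (T x) (T z)
        \<le> alpha * (dist x y + dist y z + dist z x)
          + lam * (dist x (T x) + dist y (T y) + dist z (T z))"
begin

lemma finite_card_fixpoints_le_2: "finite {x. T x = x} \<and> card {x. T x = x} \<le> 2"
proof (rule finite_card_le_2_if_no_three_distinct)
  fix x y z
  assume fixpoints: "x \<in> {x. T x = x}" "y \<in> {x. T x = x}" "z \<in> {x. T x = x}"
    and distinct: "x \<noteq> y" "y \<noteq> z" "x \<noteq> z"
  define S where "S = dist x y + dist y z + dist x z"
  have "S \<le> alpha * S"
    using three_point[OF distinct] fixpoints by (simp add: S_def dist_commute)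
  moreover have "S > 0"
    using distinct by (simp add: S_def add_pos_nonneg)
  ultimately show False
    using mult_strict_right_mono[of alpha 1 S] alpha_less by linarith
qed

lemma dist_le_displacements:
  assumes "x \<noteq> T x" "T x \<noteq> y" "x \<noteq> y"
  shows "dist x y \<le> (3 + lam) * (dist x (T x) + dist (T x) (T (T x)) + dist y (T y))"
proof -
  define a b c D
    where "a = dist x (T x)" and "b = dist (T x) (T (T x))" and "c = dist y (T y)"
      and "D = dist x y"
  have three_point_orbit: "b + dist (T (T x)) (T y) + dist (T x) (T y)
      \<le> alpha * (a + dist (T x) y + D) + lam * (a + b + c)"
    using three_point[OF assms] by (simp add: a_def b_def c_def D_def dist_commute)
  have "D \<le> a + dist (T x) y"
    using dist_triangle[of x y "T x"] by (simp add: a_def D_def)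
  moreover have "dist (T x) y \<le> b + dist (T (T x)) y"
    using dist_triangle[of "T x" y "T (T x)"] by (simp add: b_def)
  moreover have "dist (T (T x)) y \<le> dist (T (T x)) (T y) + c"
    using dist_triangle[of "T (T x)" y "T y"] by (simp add: c_def dist_commute)
  moreover have "dist (T x) y \<le> dist (T x) (T y) + c"
    using dist_triangle[of "T x" y "T y"] by (simp add: c_def dist_commute)
  moreover have "alpha * (a + dist (T x) y + D) \<le> a + D"
  proof -
    have "dist (T x) y \<le> a + D"
      using dist_triangle[of "T x" y x] by (simp add: a_def D_def dist_commute)
    then have "alpha * (a + dist (T x) y + D) \<le> alpha * (2 * a + 2 * D)"
      using alpha_nonneg by (intro mult_left_mono) auto
    also have "\<dots> \<le> (1/2) * (2 * a + 2 * D)"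
      using alpha_less by (intro mult_right_mono) (auto simp: a_def D_def)
    finally show ?thesis by simp
  qed
  ultimately have "D \<le> 3 * a + 2 * c + lam * (a + b + c)"
    using three_point_orbit by linarith
  also have "\<dots> \<le> (3 + lam) * (a + b + c)"
    using lam_nonneg by (simp add: b_def c_def algebra_simps)
  finally show ?thesis
    by (simp add: a_def b_def c_def D_def)
qed

lemma Cauchy_orbit_if_inj:
  assumes steps: "(\<lambda>n. dist ((T ^^ Suc n) x) ((T ^^ n) x)) \<longlonglongrightarrow> 0"
    and inj: "inj (\<lambda>n. (T ^^ n) x)"
  shows "Cauchy (\<lambda>n. (T ^^ n) x)"
proof -
  define e where "e n = dist ((T ^^ Suc n) x) ((T ^^ n) x)" for n
  define u where "u n = (3 + lam) * (e n + e (Suc n))" for n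
  have e_nonneg: "e n \<ge> 0" for n
    by (simp add: e_def)
  have dist_le: "dist ((T ^^ n) x) ((T ^^ m) x) \<le> u n + u m" if le: "n \<le> m" for n m
  proof -
    consider "m = n" | "m = Suc n" | "Suc n < m"
      using le by fastforce
    then have "dist ((T ^^ n) x) ((T ^^ m) x) \<le> (3 + lam) * (e n + e (Suc n) + e m)"
    proof cases
      case 1
      then show ?thesis
        using e_nonneg lam_nonneg by simp
    next
      case 2
      then show ?thesis
        using e_nonneg lam_nonneg by (simp add: e_def dist_commute algebra_simps)
    next
      case 3
      then have "(T ^^ n) x \<noteq> T ((T ^^ n) x)" "T ((T ^^ n) x) \<noteq> (T ^^ m) x" "(T ^^ n) x \<noteq> (T ^^ m) x"
        using injD[OF inj, of n "Suc n"] injD[OF inj, of "Suc n" m] injD[OF inj, of n m] by auto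
      from dist_le_displacements[OF this] show ?thesis
        by (simp add: e_def dist_commute)
    qed
    also have "\<dots> \<le> u n + u m"
      using e_nonneg lam_nonneg by (simp add: u_def algebra_simps)
    finally show ?thesis .
  qed
  show ?thesis
  proof (rule Cauchy_if_dist_le_null)
    show "u \<longlonglongrightarrow> 0"
      unfolding u_def using steps LIMSEQ_Suc[OF steps]
      by (auto simp: e_def intro: tendsto_eq_intros)
    show "dist ((T ^^ n) x) ((T ^^ m) x) \<le> u n + u m" for n m
      using dist_le[of n m] dist_le[of m n] by (cases "n \<le> m") (auto simp: dist_commute)
  qed
qed

end

theorem corollary4p8:
  fixes T :: "'a::complete_space \<Rightarrow> 'a" and alpha lam :: real
  assumes card3: "infinite (UNIV :: 'a set) \<or> card (UNIV :: 'a set) \<ge> 3"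
    and cont: "continuous_on UNIV T"
    and asreg: "asymptotically_regular T"
    and halpha: "0 \<le> alpha" "alpha < 1/2"
    and hlam: "0 \<le> lam"
    and ineq: "\<And>x y z. x \<noteq> y \<Longrightarrow> y \<noteq> z \<Longrightarrow> x \<noteq> z \<Longrightarrow>
      dist (T x) (T y) + dist (T y) (T z) + dist (T x) (T z)
        \<le> alpha * (dist x y + dist y z + dist z x)
          + lam * (dist x (T x) + dist y (T y) + dist z (T z))"
  shows "(\<exists>x. T x = x) \<and> finite {x. T x = x} \<and> card {x. T x = x} \<le> 2"
proof -
  interpret three_point_contraction T alpha lam
    using halpha hlam ineq by unfold_locales
  fix x :: 'a
  have steps: "(\<lambda>n. dist ((T ^^ Suc n) x) ((T ^^ n) x)) \<longlonglongrightarrow> 0"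
    using asreg by (simp add: asymptotically_regular_def)
  have "\<exists>p. T p = p"
  proof (cases "inj (\<lambda>n. (T ^^ n) x)")
    case True
    then obtain p where "(\<lambda>n. (T ^^ n) x) \<longlonglongrightarrow> p"
      using Cauchy_orbit_if_inj[OF steps] Cauchy_convergent convergent_def by blast
    moreover have "isCont T p"
      using cont by (simp add: continuous_on_eq_continuous_at)
    ultimately show ?thesis
      using fixpoint_if_orbit_converges by blast
  next
    case False
    then show ?thesis
      using fixpoint_if_orbit_not_inj[OF steps] by blast
  qed
  then show ?thesis
    using finite_card_fixpoints_le_2 by blast
qed

end
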